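(* (a) Let $(Q,\cdot)$ be a Ward quasigroup with $xx=e$ for all $x$. Put $x\star y=(e\cdot x)\cdot y$ and then $x\bullet y=(e\star x)\star y$. Then $x\bullet y=x\cdot y$ for all $x,y\in Q$. (b) Let $(Q,\star,e)$ be a double Ward quasigroup. Put $x\bullet y=(e\star x)\star y$ and then $x\diamond y=(e\bullet x)\bullet y$. Then $x\diamond y=x\star y$ for all $x,y\in Q$.
   Context: A quasigroup is a magma in which $ax=b$ and $ya=b$ have unique solutions for all $a,b$. A Ward quasigroup is a quasigroup satisfying $(xz)(yz)=xy$ for all $x,y,z$; it has an element $e$ with $xx=e$ for all $x$. A double Ward quasigroup $(Q,\star,e)$ is a quasigroup with an element $e$ such that $((e\star e)\star(x\star z))\star((e\star y)\star z)=x\star y$ for all $x,y,z$. *)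

theory Defs
  imports Main
begin

definition quasigroup :: "('a \<Rightarrow> 'a \<Rightarrow> 'a) \<Rightarrow> bool" where
  "quasigroup m \<longleftrightarrow> (\<forall>a b. (\<exists>!x. m a x = b) \<and> (\<exists>!y. m y a = b))"

definition ward_quasigroup :: "('a \<Rightarrow> 'a \<Rightarrow> 'a) \<Rightarrow> bool" where
  "ward_quasigroup m \<longleftrightarrow> quasigroup m \<and> (\<forall>x y z. m (m x z) (m y z) = m x y)"

definition double_ward_quasigroup :: "('a \<Rightarrow> 'a \<Rightarrow> 'a) \<Rightarrow> 'a \<Rightarrow> bool" where
  "double_ward_quasigroup m e \<longleftrightarrow> quasigroup m \<and>
     (\<forall>x y z. m (m (m e e) (m x z)) (m (m e y) z) = m x y)"

end

theory Submission
  imports Defs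
begin

text \<open>In a Ward quasigroup, taking \<open>z = x\<close> in the Ward law gives \<open>e (y x) = x y\<close>, and
taking \<open>z = y\<close> shows that \<open>e\<close> is a right unit; together these make left multiplication
by \<open>e\<close> an involution, which is exactly the identity \<open>x \<bullet> y = x y\<close>.
In a double Ward quasigroup, with \<open>f = e e\<close>, the instances \<open>x = e\<close> and \<open>y = z = e\<close> of the
axiom give \<open>(f u) u = e\<close> and \<open>(f u) (f e) = u\<close>; comparing them at \<open>u = f e\<close> and \<open>u = e\<close>
yields \<open>f = e\<close>. The instance \<open>x = e z\<close>, \<open>y = e\<close> then reads \<open>e (e z) = (e z) e = z\<close>, so again
left multiplication by \<open>e\<close> is an involution, which collapses \<open>x \<diamond> y\<close> to \<open>x \<star> y\<close>.\<close>

lemma quasigroup_left_solvable: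
  assumes "quasigroup m"
  obtains x where "m a x = b"
  using assms unfolding quasigroup_def by blast

lemma quasigroup_right_solvable:
  assumes "quasigroup m"
  obtains y where "m y a = b"
  using assms unfolding quasigroup_def by blast

lemma ward_quasigroup_swap:
  assumes "ward_quasigroup m" and "\<And>x. m x x = e"
  shows "m e (m y x) = m x y"
proof -
  have "m (m x x) (m y x) = m x y"
    using assms(1) unfolding ward_quasigroup_def by blast
  then show ?thesis using assms(2) by simp
qed

lemma ward_quasigroup_right_unit:
  assumes ward: "ward_quasigroup m" and diag: "\<And>x. m x x = e"
  shows "m u e = u"
proof -
  have q: "quasigroup m" and law: "\<And>x y z. m (m x z) (m y z) = m x y"
    using ward unfolding ward_quasigroup_def by auto
  obtain y where y: "m u y = u"
    using q by (rule quasigroup_left_solvable)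
  have "m (m u y) (m y y) = m u y" by (rule law)
  then show ?thesis using y diag by simp
qed

lemma ward_quasigroup_left_involution:
  assumes "ward_quasigroup m" and "\<And>x. m x x = e"
  shows "m e (m e x) = x"
  using ward_quasigroup_swap[OF assms] ward_quasigroup_right_unit[OF assms] by simp

lemma double_ward_quasigroupD:
  assumes "double_ward_quasigroup s e"
  shows "quasigroup s" and "s (s (s e e) (s x z)) (s (s e y) z) = s x y"
  using assms unfolding double_ward_quasigroup_def by auto

lemma double_ward_quasigroup_left_inverse:
  assumes dw: "double_ward_quasigroup s e"
  shows "s (s (s e e) u) u = e"
proof -
  obtain z where z: "s e z = u"
    using double_ward_quasigroupD(1)[OF dw] by (rule quasigroup_left_solvable)
  obtain y where y: "s e y = e"
    using double_ward_quasigroupD(1)[OF dw] by (rule quasigroup_left_solvable)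
  have "s (s (s e e) (s e z)) (s (s e y) z) = s e y"
    by (rule double_ward_quasigroupD(2)[OF dw])
  then show ?thesis using y z by simp
qed

lemma double_ward_quasigroup_right_inverse:
  assumes dw: "double_ward_quasigroup s e"
  shows "s (s (s e e) u) (s (s e e) e) = u"
proof -
  obtain x where x: "s x e = u"
    using double_ward_quasigroupD(1)[OF dw] by (rule quasigroup_right_solvable)
  have "s (s (s e e) (s x e)) (s (s e e) e) = s x e"
    by (rule double_ward_quasigroupD(2)[OF dw])
  then show ?thesis using x by simp
qed

lemma double_ward_quasigroup_idempotent:
  assumes dw: "double_ward_quasigroup s e"
  shows "s e e = e"
proof -
  have fe: "s (s e e) e = e"
    using double_ward_quasigroup_left_inverse[OF dw, of "s (s e e) e"]
      double_ward_quasigroup_right_inverse[OF dw, of "s (s e e) e"] by simp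
  show ?thesis
    using double_ward_quasigroup_right_inverse[OF dw, of e] by (simp add: fe)
qed

lemma double_ward_quasigroup_left_involution:
  assumes dw: "double_ward_quasigroup s e"
  shows "s e (s e z) = z"
proof -
  have ee: "s e e = e" by (rule double_ward_quasigroup_idempotent[OF dw])
  have "s (s (s e e) (s (s e z) z)) (s (s e e) z) = s (s e z) e"
    by (rule double_ward_quasigroupD(2)[OF dw])
  also have "s (s e z) e = z"
    using double_ward_quasigroup_right_inverse[OF dw, of z] by (simp add: ee)
  finally show ?thesis
    using double_ward_quasigroup_left_inverse[OF dw, of z] by (simp add: ee)
qed

theorem theorem4p4:
  shows "(\<forall>(m :: 'a \<Rightarrow> 'a \<Rightarrow> 'a) e.
            ward_quasigroup m \<and> (\<forall>x. m x x = e) \<longrightarrow>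
            (let star = (\<lambda>x y. m (m e x) y);
                 bullet = (\<lambda>x y. star (star e x) y)
             in \<forall>x y. bullet x y = m x y))
       \<and> (\<forall>(s :: 'b \<Rightarrow> 'b \<Rightarrow> 'b) e.
            double_ward_quasigroup s e \<longrightarrow>
            (let bullet = (\<lambda>x y. s (s e x) y);
                 diamond = (\<lambda>x y. bullet (bullet e x) y)
             in \<forall>x y. diamond x y = s x y))"
  unfolding Let_def
proof (intro conjI allI impI)
  fix m :: "'a \<Rightarrow> 'a \<Rightarrow> 'a" and e x y
  assume "ward_quasigroup m \<and> (\<forall>x. m x x = e)"
  then have ward: "ward_quasigroup m" and diag: "\<And>x. m x x = e" by auto
  show "m (m e (m (m e e) x)) y = m x y"
    by (simp add: diag ward_quasigroup_left_involution[OF ward diag])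
next
  fix s :: "'b \<Rightarrow> 'b \<Rightarrow> 'b" and e x y
  assume dw: "double_ward_quasigroup s e"
  show "s (s e (s (s e e) x)) y = s x y"
    by (simp add: double_ward_quasigroup_idempotent[OF dw]
        double_ward_quasigroup_left_involution[OF dw])
qed

end
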